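(* For all nonnegative integers $i,j$, \[ l_i(t)\,l_j(t) = \sum_{k\geq 0} n_{i,j,k}\, l_k(t), \] where the polynomials $l_k(t)$ and the numbers $n_{i,j,k}$ are as defined in the context.
   Context: The polynomials $l_k(t)$, $k\ge 0$, are defined by the generating function $\sum_{k=0}^\infty l_k(t)x^k = e^{tx/(1+x)}$. Equivalently, $l_k(t)=(-1)^k L_k^{(-1)}(t)$, where $L_k^{(\alpha)}(t)=\sum_{i=0}^k(-1)^i\binom{k+\alpha}{k-i}\frac{t^i}{i!}$ are the generalized Laguerre polynomials. For example, $l_0=1$, $l_1=t$, $l_2=\tfrac12t^2-t$. A word is a finite sequence of letters; a word is Carlitz if no two adjacent letters are equal. A factorization is an ordered list $(\phi_1)(\phi_2)\cdots(\phi_k)$ of nonempty words, called its parts (factors). $n_{i,j,k}$ denotes the number of factorizations over the alphabet $\{a,b\}$ with exactly $k$ parts, using exactly $i$ copies of $a$ and $j$ copies of $b$ in total, such that each part is a Carlitz word. (For example, $n_{2,5,3}=6$.) *)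

theory Defs
  imports "HOL-Computational_Algebra.Polynomial"
begin

text \<open>The polynomials l_k(t) = (-1)^k L_k^(-1)(t), with
  L_k^(alpha)(t) = sum_{i=0..k} (-1)^i binom(k+alpha, k-i) t^i / i!.\<close>
definition lpoly :: "nat \<Rightarrow> real poly" where
  "lpoly k = (\<Sum>i\<le>k. smult ((-1)^k * (-1)^i * ((of_nat k - 1) gchoose (k - i)) / fact i)
                               (monom 1 i))"

datatype letter = A | B

definition carlitz :: "letter list \<Rightarrow> bool" where
  "carlitz w \<longleftrightarrow> (\<forall>m. Suc m < length w \<longrightarrow> w ! m \<noteq> w ! Suc m)"

definition carlitz_factorizations :: "nat \<Rightarrow> nat \<Rightarrow> nat \<Rightarrow> letter list list set" where
  "carlitz_factorizations i j k =
     {fs. length fs = k \<and> (\<forall>w\<in>set fs. w \<noteq> [] \<and> carlitz w)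
          \<and> count_list (concat fs) A = i \<and> count_list (concat fs) B = j}"

definition ncount :: "nat \<Rightarrow> nat \<Rightarrow> nat \<Rightarrow> nat" where
  "ncount i j k = card (carlitz_factorizations i j k)"

end

theory Submission
  imports Defs
begin

text \<open>
  The generating function \<open>F = exp (t x / (1 + x))\<close> satisfies \<open>(1 + x) \<partial>F/\<partial>t = x F\<close>,
  that is \<open>l_k = (l_k + l_(k+1))'\<close>. On the combinatorial side, classify a Carlitz factorization
  by its first factor: it is \<open>a\<close>, \<open>b\<close>, \<open>ab\<close>, \<open>ba\<close>, or \<open>x y x v\<close> with \<open>x \<noteq> y\<close>, and deleting
  \<open>x y\<close> from the latter is a bijection onto the Carlitz factorizations with one \<open>a\<close> and one \<open>b\<close>
  fewer. Hence \<open>n(i,j,k+1) = n(i-1,j,k) + n(i,j-1,k) + 2 n(i-1,j-1,k) + n(i-1,j-1,k+1)\<close>.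

  Put \<open>E(i,j) = \<Sum>_k n(i,j,k) l_k\<close>. By these two recurrences the derivative of
  \<open>E(i,j) + E(i-1,j) + E(i,j-1) + E(i-1,j-1)\<close> is \<open>E(i-1,j) + E(i,j-1) + 2 E(i-1,j-1)\<close>,
  which by induction on \<open>i + j\<close> is also the derivative of \<open>(l_i + l_(i-1)) (l_j + l_(j-1))\<close>.
  Both polynomials have the same constant term, so they are equal, and \<open>l_i l_j = E(i,j)\<close> follows.
\<close>

lemma coeff_lpoly:
  "coeff (lpoly k) m =
     (if m \<le> k then (-1)^k * (-1)^m * ((of_nat k - 1) gchoose (k - m)) / fact m else 0)"
  by (simp add: lpoly_def coeff_sum if_distrib[of "\<lambda>x. _ * x"] cong: if_cong)

lemma lpoly_0 [simp]: "lpoly 0 = 1"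
  by (simp add: lpoly_def monom_0 one_pCons)

lemma poly_lpoly_0: "poly (lpoly k) 0 = (if k = 0 then 1 else 0)"
proof (cases k)
  case (Suc n)
  have "(real (Suc n) - 1) gchoose (Suc n) = 0"
    by (simp add: binomial_gbinomial[symmetric])
  then show ?thesis
    using Suc by (simp add: poly_0_coeff_0 coeff_lpoly)
qed simp

lemma pderiv_lpoly_Suc: "pderiv (lpoly (Suc k)) + pderiv (lpoly k) = lpoly k"
proof (rule poly_eqI)
  fix m
  show "coeff (pderiv (lpoly (Suc k)) + pderiv (lpoly k)) m = coeff (lpoly k) m"
  proof (cases "m < k")
    case True
    then obtain n where n: "k - m = Suc n" "k - Suc m = n" "Suc k - Suc m = Suc n"
      by (metis Suc_diff_Suc diff_Suc_Suc)
    have pascal: "(of_nat k :: real) gchoose (Suc n)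
        = ((of_nat k - 1) gchoose n) + ((of_nat k - 1) gchoose (Suc n))"
      using gbinomial_Suc_Suc[of "of_nat k - 1 :: real" n] by simp
    show ?thesis
      using True n pascal
      by (simp add: coeff_pderiv coeff_lpoly fact_reduce[of "Suc m"] divide_simps)
        (simp add: algebra_simps)
  next
    case False
    have "(fact k :: real) + fact k * real k > 0"
      by (simp add: add_pos_nonneg)
    then show ?thesis
      using False by (cases "m = k") (auto simp: coeff_pderiv coeff_lpoly field_simps)
  qed
qed

lemma pderiv_sum: "pderiv (sum f S) = (\<Sum>x\<in>S. pderiv (f x))"
  using higher_pderiv_sum[of 1] by simp

lemma sum_smult_pderiv_lpoly:
  assumes "\<And>k. c (Suc k) = d k + d (Suc k)"
  shows "(\<Sum>k\<le>K. smult (c k) (pderiv (lpoly k)))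
           = (\<Sum>k\<le>K. smult (d k) (lpoly k)) - smult (d K) (pderiv (lpoly (Suc K)))"
proof (induction K)
  case 0
  have "pderiv (lpoly 1) = 1"
    using pderiv_lpoly_Suc[of 0] by simp
  then show ?case by simp
next
  case (Suc K)
  have "smult (d (Suc K)) (lpoly (Suc K))
          = smult (d (Suc K)) (pderiv (lpoly (Suc K))) + smult (d (Suc K)) (pderiv (lpoly (Suc (Suc K))))"
    using pderiv_lpoly_Suc[of "Suc K"] by (simp add: smult_add_right[symmetric] add.commute)
  then show ?case
    using Suc.IH by (simp add: assms smult_add_left algebra_simps)
qed

lemma pderiv_poly_0_eqI:
  fixes p q :: "'a :: {idom, ring_char_0} poly"
  assumes "pderiv p = pderiv q" and "poly p 0 = poly q 0"
  shows "p = q"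
proof -
  obtain h where h: "p - q = [:h:]"
    using pderiv_iszero[of "p - q"] assms(1) by (auto simp: pderiv_diff)
  moreover have "poly (p - q) 0 = 0"
    using assms(2) by simp
  ultimately show ?thesis by simp
qed

lemma UNIV_letter: "(UNIV :: letter set) = {A, B}"
  using letter.exhaust by auto

lemma carlitz_singleton [simp]: "carlitz [x]"
  by (simp add: carlitz_def)

lemma carlitz_Cons_Cons [simp]: "carlitz (x # y # w) \<longleftrightarrow> x \<noteq> y \<and> carlitz (y # w)"
  unfolding carlitz_def by (simp add: All_less_Suc2)

lemma length_eq_count_A_B: "length w = count_list w A + count_list w B"
proof (induction w)
  case (Cons x w)
  then show ?case by (cases x) simp_all
qed simp

lemma length_le_length_concat: "\<forall>w\<in>set fs. w \<noteq> [] \<Longrightarrow> length fs \<le> length (concat fs)"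
  by (induction fs) (auto simp: Suc_le_eq neq_Nil_conv)

lemma carlitz_factorizations_Cons:
  "w # fs \<in> carlitz_factorizations i j (Suc k) \<longleftrightarrow>
     w \<noteq> [] \<and> carlitz w \<and> count_list w A \<le> i \<and> count_list w B \<le> j \<and>
     fs \<in> carlitz_factorizations (i - count_list w A) (j - count_list w B) k"
  by (auto simp: carlitz_factorizations_def)

lemma finite_carlitz_factorizations: "finite (carlitz_factorizations i j k)"
proof -
  let ?W = "{w :: letter list. set w \<subseteq> UNIV \<and> length w \<le> i + j}"
  have "length w \<le> i + j" if "fs \<in> carlitz_factorizations i j k" "w \<in> set fs" for fs w
  proof -
    have "length w \<le> length (concat fs)"
      using \<open>w \<in> set fs\<close> by (simp add: length_concat member_le_sum_list)
    then show ?thesis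
      using that(1) length_eq_count_A_B[of "concat fs"] by (simp add: carlitz_factorizations_def)
  qed
  then have "carlitz_factorizations i j k \<subseteq> {fs. set fs \<subseteq> ?W \<and> length fs \<le> k}"
    by (auto simp: carlitz_factorizations_def)
  moreover have "finite ?W"
    by (rule finite_lists_length_le) (simp add: UNIV_letter)
  ultimately show ?thesis
    using finite_lists_length_le finite_subset by blast
qed

lemma ncount_eq_0_if_less: "i + j < k \<Longrightarrow> ncount i j k = 0"
proof -
  assume "i + j < k"
  have "k \<le> i + j" if "fs \<in> carlitz_factorizations i j k" for fs
    using that length_le_length_concat[of fs] length_eq_count_A_B[of "concat fs"]
    by (auto simp: carlitz_factorizations_def)
  with \<open>i + j < k\<close> show ?thesis
    by (fastforce simp: ncount_def)
qed

lemma ncount_0: "ncount i j 0 = (if i = 0 \<and> j = 0 then 1 else 0)"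
proof -
  have "carlitz_factorizations i j 0 = (if i = 0 \<and> j = 0 then {[]} else {})"
    by (auto simp: carlitz_factorizations_def)
  then show ?thesis
    by (simp add: ncount_def)
qed

lemma carlitz_factorizations_Suc_hd_tl:
  assumes "fs \<in> carlitz_factorizations i j (Suc k)"
  shows "fs = hd fs # tl fs" and "hd fs \<noteq> []"
  using assms by (cases fs; auto simp: carlitz_factorizations_def)+

lemma carlitz_factorizations_Suc_hd:
  "{fs \<in> carlitz_factorizations i j (Suc k). hd fs = w} =
     (if w \<noteq> [] \<and> carlitz w \<and> count_list w A \<le> i \<and> count_list w B \<le> j
      then (#) w ` carlitz_factorizations (i - count_list w A) (j - count_list w B) k else {})"
proof -
  have "fs \<in> carlitz_factorizations i j (Suc k) \<and> hd fs = w \<longleftrightarrow>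
      (\<exists>gs. fs = w # gs \<and> w # gs \<in> carlitz_factorizations i j (Suc k))" for fs
    by (cases fs) (auto simp: carlitz_factorizations_def)
  then show ?thesis
    by (auto simp: carlitz_factorizations_Cons)
qed

lemma card_carlitz_factorizations_Suc_hd:
  assumes "w \<noteq> []" and "carlitz w"
  shows "card {fs \<in> carlitz_factorizations i j (Suc k). hd fs = w} =
    (if count_list w A \<le> i \<and> count_list w B \<le> j
     then ncount (i - count_list w A) (j - count_list w B) k else 0)"
  using assms by (simp add: carlitz_factorizations_Suc_hd card_image ncount_def)

fun other_letter :: "letter \<Rightarrow> letter" where
  "other_letter A = B"
| "other_letter B = A"

definition prepend_pair :: "letter list \<Rightarrow> letter list" where
  "prepend_pair w = hd w # other_letter (hd w) # w"

lemma other_letter_neq [simp]: "other_letter x \<noteq> x" "x \<noteq> other_letter x"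
  by (cases x; simp)+

lemma prepend_pair_neq_Nil [simp]: "prepend_pair w \<noteq> []"
  by (simp add: prepend_pair_def)

lemma drop_2_prepend_pair [simp]: "drop 2 (prepend_pair u) = u"
  by (simp add: prepend_pair_def numeral_2_eq_2)

lemma length_prepend_pair [simp]: "length (prepend_pair w) = length w + 2"
  by (simp add: prepend_pair_def)

lemma carlitz_prepend_pair: "w \<noteq> [] \<Longrightarrow> carlitz (prepend_pair w) \<longleftrightarrow> carlitz w"
  by (auto simp: prepend_pair_def neq_Nil_conv)

lemma count_list_prepend_pair:
  "w \<noteq> [] \<Longrightarrow> count_list (prepend_pair w) A = Suc (count_list w A)"
  "w \<noteq> [] \<Longrightarrow> count_list (prepend_pair w) B = Suc (count_list w B)"
  by (cases "hd w"; simp add: prepend_pair_def)+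

lemma prepend_pair_drop_2:
  assumes "carlitz w" and "3 \<le> length w"
  shows "prepend_pair (drop 2 w) = w"
proof -
  obtain x y z v where "w = x # y # z # v"
    using \<open>3 \<le> length w\<close> by (auto simp: numeral_3_eq_3 Suc_le_length_iff)
  with \<open>carlitz w\<close> show ?thesis
    by (cases x; cases y; cases z) (auto simp: prepend_pair_def)
qed

lemma prepend_pair_Cons_in_carlitz_factorizations:
  assumes "u \<noteq> []"
  shows "prepend_pair u # fs \<in> carlitz_factorizations i j (Suc k) \<longleftrightarrow>
    0 < i \<and> 0 < j \<and> u # fs \<in> carlitz_factorizations (i - 1) (j - 1) (Suc k)"
  using assms by (auto simp: carlitz_factorizations_Cons carlitz_prepend_pair count_list_prepend_pair)

lemma carlitz_factorizations_Suc_long: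
  "{fs \<in> carlitz_factorizations i j (Suc k). 3 \<le> length (hd fs)} =
     (if 0 < i \<and> 0 < j
      then (\<lambda>gs. prepend_pair (hd gs) # tl gs) ` carlitz_factorizations (i - 1) (j - 1) (Suc k)
      else {})"
proof -
  have "fs \<in> carlitz_factorizations i j (Suc k) \<and> 3 \<le> length (hd fs) \<longleftrightarrow>
      0 < i \<and> 0 < j \<and> (\<exists>gs \<in> carlitz_factorizations (i - 1) (j - 1) (Suc k).
         fs = prepend_pair (hd gs) # tl gs)" for fs
  proof
    assume *: "fs \<in> carlitz_factorizations i j (Suc k) \<and> 3 \<le> length (hd fs)"
    then have fs: "fs = hd fs # tl fs"
      using carlitz_factorizations_Suc_hd_tl(1) by blast
    with * have "carlitz (hd fs)"
      by (metis carlitz_factorizations_Cons)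
    define u where "u = drop 2 (hd fs)"
    have "hd fs = prepend_pair u" and "u \<noteq> []"
      using * \<open>carlitz (hd fs)\<close> by (simp_all add: u_def prepend_pair_drop_2)
    with * fs have "0 < i \<and> 0 < j \<and> u # tl fs \<in> carlitz_factorizations (i - 1) (j - 1) (Suc k)"
      by (metis prepend_pair_Cons_in_carlitz_factorizations)
    with \<open>hd fs = prepend_pair u\<close> fs show "0 < i \<and> 0 < j \<and>
        (\<exists>gs \<in> carlitz_factorizations (i - 1) (j - 1) (Suc k). fs = prepend_pair (hd gs) # tl gs)"
      by (metis list.sel(1,3))
  next
    assume "0 < i \<and> 0 < j \<and> (\<exists>gs \<in> carlitz_factorizations (i - 1) (j - 1) (Suc k).
        fs = prepend_pair (hd gs) # tl gs)"
    then obtain gs where "0 < i" "0 < j" and gs: "gs \<in> carlitz_factorizations (i - 1) (j - 1) (Suc k)"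
      and "fs = prepend_pair (hd gs) # tl gs"
      by blast
    with carlitz_factorizations_Suc_hd_tl[OF gs]
    show "fs \<in> carlitz_factorizations i j (Suc k) \<and> 3 \<le> length (hd fs)"
      by (simp add: prepend_pair_Cons_in_carlitz_factorizations Suc_le_eq)
  qed
  then show ?thesis
    by auto
qed

lemma card_carlitz_factorizations_Suc_long:
  "card {fs \<in> carlitz_factorizations i j (Suc k). 3 \<le> length (hd fs)} =
     (if 0 < i \<and> 0 < j then ncount (i - 1) (j - 1) (Suc k) else 0)"
proof -
  have "inj_on (\<lambda>gs. prepend_pair (hd gs) # tl gs) (carlitz_factorizations i' j' (Suc k))" for i' j'
  proof (rule inj_onI)
    fix gs hs
    assume "gs \<in> carlitz_factorizations i' j' (Suc k)" "hs \<in> carlitz_factorizations i' j' (Suc k)"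
      and "prepend_pair (hd gs) # tl gs = prepend_pair (hd hs) # tl hs"
    then show "gs = hs"
      by (metis carlitz_factorizations_Suc_hd_tl(1) drop_2_prepend_pair list.inject)
  qed
  then show ?thesis
    by (simp add: carlitz_factorizations_Suc_long card_image ncount_def)
qed

lemma short_carlitz_word:
  "w \<noteq> [] \<Longrightarrow> carlitz w \<Longrightarrow> length w < 3 \<Longrightarrow> w \<in> {[A], [B], [A, B], [B, A]}"
  by (cases w rule: remdups_adj.cases) (use letter.exhaust in auto)

lemma ncount_Suc:
  "ncount i j (Suc k) =
     (if 0 < i then ncount (i - 1) j k else 0) + (if 0 < j then ncount i (j - 1) k else 0)
     + (if 0 < i \<and> 0 < j then 2 * ncount (i - 1) (j - 1) k + ncount (i - 1) (j - 1) (Suc k) else 0)"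
proof -
  let ?X = "carlitz_factorizations i j (Suc k)"
  let ?short = "{[A], [B], [A, B], [B, A]}"
  have "hd fs \<in> ?short \<or> 3 \<le> length (hd fs)" if "fs \<in> ?X" for fs
  proof -
    have "hd fs \<noteq> [] \<and> carlitz (hd fs)"
      using that carlitz_factorizations_Suc_hd_tl[OF that] by (metis carlitz_factorizations_Cons)
    then show ?thesis
      using short_carlitz_word not_le by blast
  qed
  then have X: "?X = (\<Union>w\<in>?short. {fs \<in> ?X. hd fs = w}) \<union> {fs \<in> ?X. 3 \<le> length (hd fs)}"
    by auto
  have "card ?X = card (\<Union>w\<in>?short. {fs \<in> ?X. hd fs = w}) + card {fs \<in> ?X. 3 \<le> length (hd fs)}"
    by (subst X, rule card_Un_disjoint) (auto simp: finite_carlitz_factorizations)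
  also have "card (\<Union>w\<in>?short. {fs \<in> ?X. hd fs = w}) = (\<Sum>w\<in>?short. card {fs \<in> ?X. hd fs = w})"
    by (rule card_UN_disjoint) (auto simp: finite_carlitz_factorizations)
  also have "\<dots> + card {fs \<in> ?X. 3 \<le> length (hd fs)} =
      (if 0 < i then ncount (i - 1) j k else 0) + (if 0 < j then ncount i (j - 1) k else 0)
      + (if 0 < i \<and> 0 < j then 2 * ncount (i - 1) (j - 1) k + ncount (i - 1) (j - 1) (Suc k) else 0)"
    by (simp add: card_carlitz_factorizations_Suc_hd card_carlitz_factorizations_Suc_long Suc_le_eq)
  finally show ?thesis
    by (simp add: ncount_def)
qed

text \<open>Extending \<open>l\<close> and \<open>n\<close> by zero to negative indices lets both recurrences hold
  without boundary cases.\<close>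

definition lpoly_int :: "int \<Rightarrow> real poly" where
  "lpoly_int a = (if a < 0 then 0 else lpoly (nat a))"

definition ncount_int :: "int \<Rightarrow> int \<Rightarrow> nat \<Rightarrow> real" where
  "ncount_int a b k = (if a < 0 \<or> b < 0 then 0 else real (ncount (nat a) (nat b) k))"

definition lpoly_expansion :: "nat \<Rightarrow> int \<Rightarrow> int \<Rightarrow> real poly" where
  "lpoly_expansion K a b = (\<Sum>k\<le>K. smult (ncount_int a b k) (lpoly k))"

lemma ncount_int_Suc:
  "ncount_int a b (Suc k) = ncount_int (a - 1) b k + ncount_int a (b - 1) k
     + 2 * ncount_int (a - 1) (b - 1) k + ncount_int (a - 1) (b - 1) (Suc k)"
proof (cases "a < 0 \<or> b < 0")
  case False
  then obtain i j where "a = int i" "b = int j"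
    by (metis nonneg_int_cases not_le)
  then show ?thesis
    using ncount_Suc[of i j k] by (cases i; cases j) (simp_all add: ncount_int_def nat_add_distrib)
qed (auto simp: ncount_int_def)

lemma ncount_int_eq_0: "a + b < int k \<Longrightarrow> ncount_int a b k = 0"
  by (auto simp: ncount_int_def intro!: ncount_eq_0_if_less)

lemma pderiv_lpoly_int: "pderiv (lpoly_int a + lpoly_int (a - 1)) = lpoly_int (a - 1)"
proof (cases "a \<le> 0")
  case False
  define n where "n = nat (a - 1)"
  have "a = int (Suc n)"
    using False by (simp add: n_def)
  then show ?thesis
    using pderiv_lpoly_Suc[of n] by (simp add: lpoly_int_def pderiv_add nat_add_distrib)
qed (auto simp: lpoly_int_def)

lemma poly_lpoly_int_0: "poly (lpoly_int a) 0 = (if a = 0 then 1 else 0)"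
  by (simp add: lpoly_int_def poly_lpoly_0)

lemma poly_lpoly_expansion_0: "poly (lpoly_expansion K a b) 0 = poly (lpoly_int a * lpoly_int b) 0"
proof -
  have "poly (lpoly_expansion K a b) 0 = (\<Sum>k\<le>K. if k = 0 then ncount_int a b k else 0)"
    by (simp add: lpoly_expansion_def poly_sum poly_lpoly_0 if_distrib[of "\<lambda>x. _ * x"] cong: if_cong)
  also have "\<dots> = ncount_int a b 0"
    by simp
  finally show ?thesis
    by (auto simp: ncount_int_def ncount_0 poly_lpoly_int_0)
qed

lemma pderiv_lpoly_expansion_box:
  assumes "a + b \<le> int K"
  shows "pderiv (lpoly_expansion K a b + lpoly_expansion K (a - 1) b
            + lpoly_expansion K a (b - 1) + lpoly_expansion K (a - 1) (b - 1))
       = lpoly_expansion K (a - 1) b + lpoly_expansion K a (b - 1)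
            + lpoly_expansion K (a - 1) (b - 1) + lpoly_expansion K (a - 1) (b - 1)"
proof -
  define c where "c k = ncount_int a b k + ncount_int (a - 1) b k
    + ncount_int a (b - 1) k + ncount_int (a - 1) (b - 1) k" for k
  define d where "d k = ncount_int (a - 1) b k + ncount_int a (b - 1) k
    + ncount_int (a - 1) (b - 1) k + ncount_int (a - 1) (b - 1) k" for k
  have c_Suc: "c (Suc k) = d k + d (Suc k)" for k
    using ncount_int_Suc[of a b k] by (simp add: c_def d_def)
  have "d K = 0"
    using assms by (simp add: d_def ncount_int_eq_0)
  have "pderiv (lpoly_expansion K a b + lpoly_expansion K (a - 1) b
            + lpoly_expansion K a (b - 1) + lpoly_expansion K (a - 1) (b - 1))
      = (\<Sum>k\<le>K. smult (c k) (pderiv (lpoly k)))"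
    by (simp add: lpoly_expansion_def c_def pderiv_sum pderiv_add pderiv_smult smult_add_left sum.distrib)
  also have "\<dots> = (\<Sum>k\<le>K. smult (d k) (lpoly k))"
    using sum_smult_pderiv_lpoly[of c d, OF c_Suc] \<open>d K = 0\<close> by simp
  also have "\<dots> = lpoly_expansion K (a - 1) b + lpoly_expansion K a (b - 1)
            + lpoly_expansion K (a - 1) (b - 1) + lpoly_expansion K (a - 1) (b - 1)"
    by (simp only: lpoly_expansion_def d_def smult_add_left sum.distrib)
  finally show ?thesis .
qed

lemma lpoly_int_mult:
  "a + b \<le> int K \<Longrightarrow> lpoly_int a * lpoly_int b = lpoly_expansion K a b"
proof (induction "nat (a + b + 1)" arbitrary: a b rule: less_induct)
  case less
  show ?case
  proof (cases "a < 0 \<or> b < 0")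
    case True
    then show ?thesis
      by (auto simp: lpoly_int_def lpoly_expansion_def ncount_int_def)
  next
    case False
    have IH: "lpoly_int (a - 1) * lpoly_int b = lpoly_expansion K (a - 1) b"
      "lpoly_int a * lpoly_int (b - 1) = lpoly_expansion K a (b - 1)"
      "lpoly_int (a - 1) * lpoly_int (b - 1) = lpoly_expansion K (a - 1) (b - 1)"
      using False less by (auto intro!: less.hyps)
    define S where "S = (lpoly_int a + lpoly_int (a - 1)) * (lpoly_int b + lpoly_int (b - 1))"
    define T where "T = lpoly_expansion K a b + lpoly_expansion K (a - 1) b
      + lpoly_expansion K a (b - 1) + lpoly_expansion K (a - 1) (b - 1)"
    have "pderiv S = (lpoly_int a + lpoly_int (a - 1)) * lpoly_int (b - 1)
        + (lpoly_int b + lpoly_int (b - 1)) * lpoly_int (a - 1)"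
      by (simp add: S_def pderiv_mult pderiv_lpoly_int)
    also have "\<dots> = lpoly_expansion K (a - 1) b + lpoly_expansion K a (b - 1)
        + lpoly_expansion K (a - 1) (b - 1) + lpoly_expansion K (a - 1) (b - 1)"
      by (simp add: IH(1,2,3)[symmetric] algebra_simps)
    also have "\<dots> = pderiv T"
      using less.prems by (simp add: T_def pderiv_lpoly_expansion_box)
    finally have "pderiv S = pderiv T" .
    moreover have "poly S 0 = poly T 0"
      by (simp add: S_def T_def poly_lpoly_expansion_0 algebra_simps)
    ultimately have "S = T"
      by (rule pderiv_poly_0_eqI)
    then show ?thesis
      by (simp add: S_def T_def IH[symmetric] algebra_simps)
  qed
qed

theorem lemma2p3:
  fixes i j :: nat
  shows "lpoly i * lpoly j = (\<Sum>k\<in>{k. ncount i j k \<noteq> 0}. smult (real (ncount i j k)) (lpoly k))"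
proof -
  have "lpoly i * lpoly j = (\<Sum>k\<le>i + j. smult (real (ncount i j k)) (lpoly k))"
    using lpoly_int_mult[of "int i" "int j" "i + j"]
    by (simp add: lpoly_int_def lpoly_expansion_def ncount_int_def)
  also have "\<dots> = (\<Sum>k\<in>{k. ncount i j k \<noteq> 0}. smult (real (ncount i j k)) (lpoly k))"
    using ncount_eq_0_if_less[of i j] by (intro sum.mono_neutral_right) (auto intro: leI)
  finally show ?thesis .
qed

end
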